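(* Let $G$ be a brick and let $X,Y\subseteq V(G)$ be such that $\overline{X}$ and $\overline{Y}$ are nonempty and disjoint, $G/X$ and $G/Y$ are bricks, and the graph $H=(G/(\overline{X}\to\overline{x}))/(\overline{Y}\to\overline{y})$ is a bipartite matching covered graph. Then every edge of $H$ incident with $\overline{x}$ is removable in $H$.
   Context: Graphs are finite and loopless; multiple edges allowed. For $X\subseteq V(G)$, $\overline{X}=V(G)\setminus X$ and $\partial(X)$ is the set of edges with exactly one end in $X$. $G/(X\to x)$ (or $G/X$) is obtained by identifying all vertices of $X$ into a new vertex $x$ and deleting edges with both ends in $X$. A graph is matching covered if it is connected, has at least two vertices, and every edge lies in a perfect matching. A cut $\partial(X)$ is tight if every perfect matching contains exactly one of its edges, trivial if $|X|=1$ or $|\overline{X}|=1$. A brick is a nonbipartite matching covered graph all of whose tight cuts are trivial. An edge $e$ of a matching covered graph $H$ is removable if $H-e$ is matching covered. *)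

theory Defs
  imports Main
begin

text \<open>Finite loopless multigraphs: a vertex set, an edge set (edges are abstract
  objects, so parallel edges are allowed), and an endpoint map.\<close>

record ('v, 'e) mgraph =
  verts :: "'v set"
  edges :: "'e set"
  ends  :: "'e \<Rightarrow> 'v set"

definition wf_graph :: "('v, 'e) mgraph \<Rightarrow> bool" where
  "wf_graph G \<longleftrightarrow> finite (verts G) \<and> finite (edges G) \<and>
     (\<forall>e\<in>edges G. ends G e \<subseteq> verts G \<and> card (ends G e) = 2)"

definition cut :: "('v, 'e) mgraph \<Rightarrow> 'v set \<Rightarrow> 'e set" where
  "cut G X = {e \<in> edges G. card (ends G e \<inter> X) = 1}"

definition adj :: "('v, 'e) mgraph \<Rightarrow> ('v \<times> 'v) set" where
  "adj G = {(u, v). \<exists>e\<in>edges G. ends G e = {u, v}}"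

definition connected_graph :: "('v, 'e) mgraph \<Rightarrow> bool" where
  "connected_graph G \<longleftrightarrow> verts G \<noteq> {} \<and>
     (\<forall>u\<in>verts G. \<forall>v\<in>verts G. (u, v) \<in> (adj G)\<^sup>*)"

definition perfect_matching :: "('v, 'e) mgraph \<Rightarrow> 'e set \<Rightarrow> bool" where
  "perfect_matching G M \<longleftrightarrow> M \<subseteq> edges G \<and>
     (\<forall>v\<in>verts G. \<exists>!e. e \<in> M \<and> v \<in> ends G e)"

definition matching_covered :: "('v, 'e) mgraph \<Rightarrow> bool" where
  "matching_covered G \<longleftrightarrow> wf_graph G \<and> connected_graph G \<and> card (verts G) \<ge> 2 \<and>
     (\<forall>e\<in>edges G. \<exists>M. perfect_matching G M \<and> e \<in> M)"

definition bipartite :: "('v, 'e) mgraph \<Rightarrow> bool" where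
  "bipartite G \<longleftrightarrow> (\<exists>A. A \<subseteq> verts G \<and> (\<forall>e\<in>edges G. card (ends G e \<inter> A) = 1))"

definition tight_cut :: "('v, 'e) mgraph \<Rightarrow> 'v set \<Rightarrow> bool" where
  "tight_cut G X \<longleftrightarrow> (\<forall>M. perfect_matching G M \<longrightarrow> card (M \<inter> cut G X) = 1)"

definition trivial_cut :: "('v, 'e) mgraph \<Rightarrow> 'v set \<Rightarrow> bool" where
  "trivial_cut G X \<longleftrightarrow> card X = 1 \<or> card (verts G - X) = 1"

definition brick :: "('v, 'e) mgraph \<Rightarrow> bool" where
  "brick G \<longleftrightarrow> matching_covered G \<and> \<not> bipartite G \<and>
     (\<forall>X. X \<subseteq> verts G \<longrightarrow> tight_cut G X \<longrightarrow> trivial_cut G X)"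

text \<open>Contraction \<open>G/(X \<rightarrow> x)\<close>: old vertices outside X become \<open>Some v\<close>, the new
  vertex x is \<open>None\<close>; edges with both ends in X are deleted.\<close>
definition contract :: "('v, 'e) mgraph \<Rightarrow> 'v set \<Rightarrow> ('v option, 'e) mgraph" where
  "contract G X =
     \<lparr> verts = Some ` (verts G - X) \<union> {None},
       edges = {e \<in> edges G. \<not> ends G e \<subseteq> X},
       ends = (\<lambda>e. (\<lambda>v. if v \<in> X then None else Some v) ` ends G e) \<rparr>"

definition delete_edge :: "('v, 'e) mgraph \<Rightarrow> 'e \<Rightarrow> ('v, 'e) mgraph" where
  "delete_edge G e = G\<lparr> edges := edges G - {e} \<rparr>"

definition removable :: "('v, 'e) mgraph \<Rightarrow> 'e \<Rightarrow> bool" where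
  "removable G e \<longleftrightarrow> matching_covered (delete_edge G e)"

end

theory Submission
  imports Defs
begin

text \<open>Let \<open>A \<ni> xb\<close> and \<open>B\<close> be the colour classes of \<open>H\<close>. All vertices of \<open>H\<close> other than
  \<open>xb\<close> and \<open>yb\<close> are vertices of \<open>G\<close>, so a perfect matching \<open>M\<close> of \<open>G\<close> meets them once, while
  \<open>xb\<close> and \<open>yb\<close> meet \<open>|M \<inter> \<partial>(Xb)|\<close> and \<open>|M \<inter> \<partial>(Yb)|\<close> edges of \<open>M\<close>; since \<open>G\<close>, \<open>G/X\<close> and
  \<open>G/Y\<close> are bricks, these numbers are odd and not always \<open>1\<close>. Counting on both sides of \<open>H\<close> puts
  \<open>yb\<close> into \<open>B\<close> and makes the two numbers equal. Hence if \<open>xb \<in> S \<subseteq> A\<close> has all its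
  neighbours in some \<open>T \<subseteq> B\<close> with \<open>|T| = |S| + 1\<close>, the cut of \<open>G\<close> corresponding to
  \<open>S \<union> T\<close> is tight, hence trivial.

  For \<open>e = xb b\<close> and another edge \<open>f = uv\<close>, a perfect matching of \<open>H\<close> through \<open>f\<close> avoiding
  \<open>e\<close> exists by Hall's theorem for \<open>A - u\<close> in \<open>H - e - u - v\<close>. A Hall-deficient set yields a
  pair \<open>(S, T)\<close> as above, and the only trivial outcome, a single vertex \<open>z\<close> of \<open>H\<close> outside
  \<open>S \<union> T\<close>, forces all edges at \<open>b\<close> other than \<open>e\<close> to end in \<open>z\<close>, which again gives a
  nontrivial tight cut of \<open>G\<close>.\<close>

section \<open>Hall's theorem\<close>

definition has_sdr :: "'i set \<Rightarrow> ('i \<Rightarrow> 'a set) \<Rightarrow> bool" where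
  "has_sdr I N \<longleftrightarrow> (\<exists>g. inj_on g I \<and> (\<forall>i\<in>I. g i \<in> N i))"

definition hall_condition :: "'i set \<Rightarrow> ('i \<Rightarrow> 'a set) \<Rightarrow> bool" where
  "hall_condition I N \<longleftrightarrow> (\<forall>J\<subseteq>I. card J \<le> card (\<Union>(N ` J)))"

lemma has_sdr_critical_split:
  assumes "J \<subseteq> I" and "has_sdr J N" and "has_sdr (I - J) (\<lambda>i. N i - \<Union>(N ` J))"
  shows "has_sdr I N"
proof -
  obtain g1 where g1: "inj_on g1 J" "\<forall>i\<in>J. g1 i \<in> N i"
    using assms(2) unfolding has_sdr_def by blast
  obtain g2 where g2: "inj_on g2 (I - J)" "\<forall>i\<in>I - J. g2 i \<in> N i - \<Union>(N ` J)"
    using assms(3) unfolding has_sdr_def by blast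
  define g where "g i = (if i \<in> J then g1 i else g2 i)" for i
  have fresh: "g2 i \<notin> N j" if "i \<in> I - J" "j \<in> J" for i j
    using g2(2) that by blast
  have "inj_on g I"
  proof (rule inj_onI)
    fix a b assume ab: "a \<in> I" "b \<in> I" "g a = g b"
    show "a = b"
    proof (cases "a \<in> J \<longleftrightarrow> b \<in> J")
      case True
      then show ?thesis using ab g1(1) g2(1) unfolding g_def by (auto dest: inj_onD)
    next
      case False
      then show ?thesis using ab g1(2) fresh unfolding g_def by (metis DiffI)
    qed
  qed
  moreover have "\<forall>i\<in>I. g i \<in> N i" using g1 g2 unfolding g_def by auto
  ultimately show ?thesis unfolding has_sdr_def by blast
qed

lemma has_sdr_insert_representative:
  assumes "y \<in> N a" and "has_sdr (I - {a}) (\<lambda>i. N i - {y})"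
  shows "has_sdr I N"
proof -
  obtain g2 where g2: "inj_on g2 (I - {a})" "\<forall>i\<in>I - {a}. g2 i \<in> N i - {y}"
    using assms(2) unfolding has_sdr_def by blast
  define g where "g i = (if i = a then y else g2 i)" for i
  have "inj_on g I"
    using g2 unfolding g_def by (auto simp: inj_on_def)
  moreover have "\<forall>i\<in>I. g i \<in> N i" using g2 assms(1) unfolding g_def by auto
  ultimately show ?thesis unfolding has_sdr_def by blast
qed

lemma hall_condition_remove_critical:
  assumes hall: "hall_condition I N" and fin: "finite I" "\<forall>i\<in>I. finite (N i)"
    and J: "J \<subseteq> I" "card (\<Union>(N ` J)) = card J"
  shows "hall_condition (I - J) (\<lambda>i. N i - \<Union>(N ` J))"
  unfolding hall_condition_def
proof (intro allI impI)
  fix K assume K: "K \<subseteq> I - J"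
  have fin_un: "finite (\<Union>(N ` L))" if "L \<subseteq> I" for L
    using that fin by (meson finite_UN_I finite_subset subsetD)
  have fin_K: "finite K" and fin_J: "finite J"
    using K J(1) fin(1) by (auto intro: rev_finite_subset)
  have "card K + card J = card (K \<union> J)"
    using K by (intro card_Un_disjoint[symmetric] fin_K fin_J) blast
  also have "\<dots> \<le> card (\<Union>(N ` (K \<union> J)))"
    using hall K J(1) unfolding hall_condition_def by (meson Diff_subset Un_least order_trans)
  also have "\<Union>(N ` (K \<union> J)) = \<Union>((\<lambda>i. N i - \<Union>(N ` J)) ` K) \<union> \<Union>(N ` J)" by auto
  also have "card \<dots> = card (\<Union>((\<lambda>i. N i - \<Union>(N ` J)) ` K)) + card (\<Union>(N ` J))"
  proof (rule card_Un_disjoint)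
    show "finite (\<Union>((\<lambda>i. N i - \<Union>(N ` J)) ` K))"
      using fin_un[of K] K by (auto intro: rev_finite_subset)
  qed (use fin_un[OF J(1)] in auto)
  finally show "card K \<le> card (\<Union>((\<lambda>i. N i - \<Union>(N ` J)) ` K))" using J(2) by simp
qed

lemma hall_condition_remove_one:
  assumes a: "a \<in> I"
    and surplus: "\<And>J. J \<subseteq> I \<Longrightarrow> J \<noteq> {} \<Longrightarrow> J \<noteq> I \<Longrightarrow> card J < card (\<Union>(N ` J))"
  shows "hall_condition (I - {a}) (\<lambda>i. N i - {y})"
  unfolding hall_condition_def
proof (intro allI impI)
  fix K assume K: "K \<subseteq> I - {a}"
  show "card K \<le> card (\<Union>((\<lambda>i. N i - {y}) ` K))"
  proof (cases "K = {}")
    case False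
    have "K \<noteq> I" using K a by auto
    then have "card K < card (\<Union>(N ` K))" using surplus K False by blast
    moreover have "\<Union>((\<lambda>i. N i - {y}) ` K) = \<Union>(N ` K) - {y}" by auto
    moreover have "card (\<Union>(N ` K)) - 1 \<le> card (\<Union>(N ` K) - {y})"
      using diff_card_le_card_Diff[of "{y}" "\<Union>(N ` K)"] by simp
    ultimately show ?thesis by simp
  qed simp
qed

theorem hall_marriage:
  assumes "finite I" and "\<forall>i\<in>I. finite (N i)" and "hall_condition I N"
  shows "has_sdr I N"
  using assms
proof (induction "card I" arbitrary: I N rule: less_induct)
  case less
  show ?case
  proof (cases "\<exists>J. J \<subseteq> I \<and> J \<noteq> {} \<and> J \<noteq> I \<and> card (\<Union>(N ` J)) = card J")
    case True
    then obtain J where J: "J \<subseteq> I" "J \<noteq> {}" "J \<noteq> I" "card (\<Union>(N ` J)) = card J" by blast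
    have fin_J: "finite J" using J(1) less.prems(1) finite_subset by blast
    have "card J < card I"
      using J(1,3) less.prems(1) by (simp add: psubset_card_mono psubset_eq)
    moreover have "hall_condition J N"
      using less.prems(3) J(1) unfolding hall_condition_def by blast
    ultimately have "has_sdr J N"
      using less.hyps fin_J less.prems(2) J(1) by blast
    moreover have "card (I - J) < card I"
      using J(1,2) fin_J less.prems(1) card_mono[OF less.prems(1) J(1)] card_gt_0_iff[of J]
      by (simp add: card_Diff_subset)
    then have "has_sdr (I - J) (\<lambda>i. N i - \<Union>(N ` J))"
      using less.hyps less.prems(1,2) hall_condition_remove_critical[OF less.prems(3,1,2) J(1,4)]
      by auto
    ultimately show ?thesis using has_sdr_critical_split[OF J(1)] by blast
  next
    case False
    then have surplus: "\<And>J. J \<subseteq> I \<Longrightarrow> J \<noteq> {} \<Longrightarrow> J \<noteq> I \<Longrightarrow> card J < card (\<Union>(N ` J))"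
      using less.prems(3) unfolding hall_condition_def by (metis le_neq_implies_less)
    show ?thesis
    proof (cases "I = {}")
      case False
      then obtain a where a: "a \<in> I" by blast
      have "card {a} \<le> card (\<Union>(N ` {a}))"
        using less.prems(3) a unfolding hall_condition_def by blast
      then have "1 \<le> card (N a)" by simp
      then obtain y where y: "y \<in> N a" by fastforce
      have "card (I - {a}) < card I" using card_Diff1_less[OF less.prems(1) a] .
      then have "has_sdr (I - {a}) (\<lambda>i. N i - {y})"
        using less.hyps less.prems(1,2) hall_condition_remove_one[OF a surplus] by auto
      with y show ?thesis by (rule has_sdr_insert_representative)
    qed (simp add: has_sdr_def)
  qed
qed

lemma card_inj_image_subset_insert:
  assumes inj: "inj_on p S" and sub: "p ` S \<subseteq> insert b N" and fin: "finite N"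
    and less: "card N < card S"
  shows "b \<notin> N" "b \<in> p ` S" "card N + 1 = card S"
proof -
  have "card S \<le> card (insert b N)"
    using card_mono[OF _ sub] fin card_image[OF inj] by simp
  moreover show "b \<notin> N"
  proof
    assume "b \<in> N"
    then have "card S \<le> card N" using \<open>card S \<le> card (insert b N)\<close> by (simp add: insert_absorb)
    then show False using less by simp
  qed
  ultimately show "card N + 1 = card S" using less fin by simp
  show "b \<in> p ` S"
  proof (rule ccontr)
    assume "b \<notin> p ` S"
    then have "p ` S \<subseteq> N" using sub by blast
    then have "card (p ` S) \<le> card N" by (rule card_mono[OF fin])
    then show False using less card_image[OF inj] by simp
  qed
qed

section \<open>Degrees, cuts and perfect matchings\<close>

lemma wf_graph_ends:
  assumes "wf_graph K" "g \<in> edges K"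
  shows "ends K g \<subseteq> verts K" "card (ends K g) = 2" "finite (ends K g)"
  using assms unfolding wf_graph_def by (auto intro: card_ge_0_finite)

lemma wf_graph_ends_doubleton:
  assumes "wf_graph K" "g \<in> edges K"
  obtains a b where "ends K g = {a, b}" "a \<noteq> b"
  using wf_graph_ends(2)[OF assms] by (meson card_2_iff)

lemma card_2_eq_doubleton:
  assumes "card E = 2" "a \<in> E" "b \<in> E" "a \<noteq> b"
  shows "E = {a, b}"
  using assms by (metis card_2_iff doubleton_eq_iff insertE singletonD)

lemma cut_singleton:
  "cut K {w} = {g \<in> edges K. w \<in> ends K g}"
  unfolding cut_def by (auto simp: Int_insert_right)

lemma sym_adj: "sym (adj K)"
  unfolding sym_def adj_def by (auto simp: insert_commute)

definition degree :: "('v, 'e) mgraph \<Rightarrow> 'e set \<Rightarrow> 'v \<Rightarrow> nat" where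
  "degree K F w = card {g \<in> F. w \<in> ends K g}"

lemma sum_degree_eq:
  assumes wf: "wf_graph K" and F: "F \<subseteq> edges K" and U: "U \<subseteq> verts K"
  shows "(\<Sum>w\<in>U. degree K F w) = 2 * card {g\<in>F. ends K g \<subseteq> U} + card (F \<inter> cut K U)"
proof -
  have fin_U: "finite U" and fin_F: "finite F"
    using wf F U unfolding wf_graph_def by (auto intro: rev_finite_subset)
  have ends_U: "card (ends K g \<inter> U) =
      (if ends K g \<subseteq> U then 2 else 0) + (if card (ends K g \<inter> U) = 1 then 1 else 0)"
    if "g \<in> F" for g
  proof (cases "ends K g \<subseteq> U")
    case True
    then show ?thesis using wf_graph_ends(2)[OF wf, of g] that F by (auto simp: Int_absorb2)
  next
    case False
    then have "ends K g \<inter> U \<subset> ends K g" by auto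
    then have "card (ends K g \<inter> U) < 2"
      using wf_graph_ends(2,3)[OF wf, of g] that F by (metis psubset_card_mono subsetD)
    then show ?thesis using False by auto
  qed
  have "(\<Sum>w\<in>U. degree K F w) = (\<Sum>w\<in>U. \<Sum>g\<in>F. if w \<in> ends K g then 1 else 0)"
    unfolding degree_def using fin_F by (simp add: sum.inter_filter[symmetric])
  also have "\<dots> = (\<Sum>g\<in>F. \<Sum>w\<in>U. if w \<in> ends K g then 1 else 0)" by (rule sum.swap)
  also have "\<dots> = (\<Sum>g\<in>F. card (ends K g \<inter> U))"
  proof (rule sum.cong[OF refl])
    fix g
    have "{w\<in>U. w \<in> ends K g} = ends K g \<inter> U" by auto
    then show "(\<Sum>w\<in>U. if w \<in> ends K g then 1 else 0) = card (ends K g \<inter> U)"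
      using fin_U by (simp add: sum.inter_filter[symmetric])
  qed
  also have "\<dots> = (\<Sum>g\<in>F. (if ends K g \<subseteq> U then 2 else 0))
      + (\<Sum>g\<in>F. (if card (ends K g \<inter> U) = 1 then 1 else 0))"
    by (simp add: ends_U sum.distrib cong: sum.cong)
  also have "\<dots> = 2 * card {g\<in>F. ends K g \<subseteq> U} + card {g\<in>F. card (ends K g \<inter> U) = 1}"
    using fin_F by (simp add: sum.inter_filter[symmetric])
  also have "{g\<in>F. card (ends K g \<inter> U) = 1} = F \<inter> cut K U"
    using F unfolding cut_def by auto
  finally show ?thesis .
qed

lemma degree_perfect_matching:
  assumes "perfect_matching K M" "w \<in> verts K"
  shows "degree K M w = 1"
proof -
  obtain g where "g \<in> M \<and> w \<in> ends K g" "\<forall>h. h \<in> M \<and> w \<in> ends K h \<longrightarrow> h = g"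
    using assms unfolding perfect_matching_def by metis
  then have "{g\<in>M. w \<in> ends K g} = {g}" by blast
  then show ?thesis unfolding degree_def by simp
qed

lemma perfect_matching_unique_edge:
  assumes "perfect_matching K M" "z \<in> verts K" "g1 \<in> M" "g2 \<in> M"
    "z \<in> ends K g1" "z \<in> ends K g2"
  shows "g1 = g2"
  using assms unfolding perfect_matching_def by blast

lemma perfect_matchingI:
  assumes "M \<subseteq> edges K" "\<forall>z\<in>verts K. \<exists>g\<in>M. z \<in> ends K g"
    "\<forall>g1\<in>M. \<forall>g2\<in>M. g1 \<noteq> g2 \<longrightarrow> ends K g1 \<inter> ends K g2 = {}"
  shows "perfect_matching K M"
  using assms unfolding perfect_matching_def by blast

lemma perfect_matching_card_eq:
  assumes wf: "wf_graph K" and pm: "perfect_matching K M" and U: "U \<subseteq> verts K"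
  shows "card U = 2 * card {g\<in>M. ends K g \<subseteq> U} + card (M \<inter> cut K U)"
proof -
  have "(\<Sum>w\<in>U. degree K M w) = card U"
    using degree_perfect_matching[OF pm] U by (simp add: subset_iff)
  then show ?thesis
    using sum_degree_eq[OF wf _ U, of M] pm unfolding perfect_matching_def by simp
qed

lemma perfect_matching_odd_cut:
  assumes "wf_graph K" "perfect_matching K M" "U \<subseteq> verts K" "odd (card U)"
  shows "odd (card (M \<inter> cut K U))"
  using perfect_matching_card_eq[OF assms(1-3)] assms(4) by simp

lemma perfect_matching_even_verts:
  assumes wf: "wf_graph K" and pm: "perfect_matching K M"
  shows "even (card (verts K))"
proof -
  have "cut K (verts K) = {}"
    using wf_graph_ends[OF wf] unfolding cut_def by (auto simp: Int_absorb2)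
  then show ?thesis using perfect_matching_card_eq[OF wf pm order_refl] by simp
qed

lemma matching_covered_has_perfect_matching:
  assumes "matching_covered K"
  obtains M where "perfect_matching K M"
proof -
  have two: "card (verts K) \<ge> 2" and conn: "connected_graph K"
    using assms unfolding matching_covered_def by auto
  have "finite (verts K)" using two by (intro card_ge_0_finite) auto
  then have "\<not> (\<forall>x\<in>verts K. \<forall>y\<in>verts K. x = y)"
    using two by (simp add: card_le_Suc0_iff_eq[symmetric])
  then obtain u v where uv: "u \<in> verts K" "v \<in> verts K" "u \<noteq> v" by blast
  then have "(u, v) \<in> (adj K)\<^sup>*" using conn unfolding connected_graph_def by auto
  then obtain w where "(u, w) \<in> adj K" using uv(3) by (cases rule: converse_rtranclE) auto
  then obtain g where "g \<in> edges K" unfolding adj_def by auto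
  then show ?thesis using assms that unfolding matching_covered_def by blast
qed

lemma tight_cut_three_vertices:
  assumes wf: "wf_graph K" and Q: "Q \<subseteq> verts K" "card Q = 3" "b \<in> Q"
    and at_b: "\<forall>g\<in>edges K. b \<in> ends K g \<longrightarrow> ends K g \<subseteq> Q"
  shows "tight_cut K Q"
  unfolding tight_cut_def
proof (intro allI impI)
  fix M assume pm: "perfect_matching K M"
  obtain g where "g \<in> M" "b \<in> ends K g"
    using pm Q unfolding perfect_matching_def by blast
  then have "g \<in> {g\<in>M. ends K g \<subseteq> Q}" using at_b pm unfolding perfect_matching_def by auto
  moreover have "finite {g\<in>M. ends K g \<subseteq> Q}"
    using pm wf unfolding perfect_matching_def wf_graph_def by (auto intro: rev_finite_subset)
  ultimately have "card {g\<in>M. ends K g \<subseteq> Q} \<ge> 1" by (auto simp: Suc_le_eq card_gt_0_iff)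
  then show "card (M \<inter> cut K Q) = 1"
    using perfect_matching_card_eq[OF wf pm Q(1)] Q(2) by presburger
qed

section \<open>Bipartite graphs\<close>

definition colour_class :: "('v, 'e) mgraph \<Rightarrow> 'v set \<Rightarrow> bool" where
  "colour_class K A \<longleftrightarrow> A \<subseteq> verts K \<and> (\<forall>g\<in>edges K. card (ends K g \<inter> A) = 1)"

lemma bipartite_iff_colour_class: "bipartite K \<longleftrightarrow> (\<exists>A. colour_class K A)"
  unfolding bipartite_def colour_class_def ..

lemma colour_class_complement:
  assumes wf: "wf_graph K" and A: "colour_class K A"
  shows "colour_class K (verts K - A)"
  unfolding colour_class_def
proof (intro conjI ballI)
  fix g assume g: "g \<in> edges K"
  have "ends K g \<inter> (verts K - A) = ends K g - (ends K g \<inter> A)"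
    using wf_graph_ends[OF wf g] by auto
  then show "card (ends K g \<inter> (verts K - A)) = 1"
    using wf_graph_ends[OF wf g] A g unfolding colour_class_def by (simp add: card_Diff_subset)
qed simp

lemma colour_class_edge:
  assumes wf: "wf_graph K" and A: "colour_class K A" and g: "g \<in> edges K"
  obtains a w where "a \<in> A" "w \<in> verts K - A" "ends K g = {a, w}"
proof -
  obtain a where a: "ends K g \<inter> A = {a}"
    using A g unfolding colour_class_def by (meson card_1_singletonE)
  obtain w where w: "ends K g \<inter> (verts K - A) = {w}"
    using colour_class_complement[OF wf A] g unfolding colour_class_def
    by (meson card_1_singletonE)
  have "ends K g = {a, w}"
    using card_2_eq_doubleton[OF wf_graph_ends(2)[OF wf g]] a w by blast
  then show ?thesis using that a w by blast
qed

lemma sum_degree_colour_class: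
  assumes wf: "wf_graph K" and A: "colour_class K A" and F: "F \<subseteq> edges K"
  shows "(\<Sum>w\<in>A. degree K F w) = card F"
proof -
  have none_inside: "{g\<in>F. ends K g \<subseteq> A} = {}"
    using A F wf_graph_ends(2)[OF wf] unfolding colour_class_def by (force simp: Int_absorb2)
  have all_cross: "F \<inter> cut K A = F"
    using A F unfolding colour_class_def cut_def by auto
  show ?thesis
    using sum_degree_eq[OF wf F, of A] A unfolding none_inside all_cross colour_class_def by simp
qed

lemma sum_degree_closed_pair:
  assumes wf: "wf_graph K" and A: "colour_class K A" and F: "F \<subseteq> edges K"
    and S: "S \<subseteq> A" and T: "T \<subseteq> verts K - A"
    and closed: "\<forall>g\<in>edges K. ends K g \<inter> S \<noteq> {} \<longrightarrow> ends K g \<subseteq> S \<union> T"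
  shows "(\<Sum>w\<in>T. degree K F w) = (\<Sum>w\<in>S. degree K F w) + card (F \<inter> cut K (S \<union> T))"
proof -
  have SV: "S \<subseteq> verts K" "S \<union> T \<subseteq> verts K" using S T A unfolding colour_class_def by auto
  have fin: "finite S" "finite T" "S \<inter> T = {}"
    using SV S T wf unfolding wf_graph_def by (auto intro: rev_finite_subset)
  have no_inner: "{g\<in>F. ends K g \<subseteq> S} = {}"
    using F S A wf_graph_ends(2)[OF wf] unfolding colour_class_def by (force simp: Int_absorb2)
  have inner: "{g\<in>F. ends K g \<subseteq> S \<union> T} = F \<inter> cut K S"
  proof (intro set_eqI iffI)
    fix g assume g: "g \<in> {g\<in>F. ends K g \<subseteq> S \<union> T}"
    then have "ends K g \<inter> A = ends K g \<inter> S" using S T by auto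
    moreover have "g \<in> edges K" using g F by auto
    ultimately show "g \<in> F \<inter> cut K S" using A g unfolding colour_class_def cut_def by auto
  qed (use closed F in \<open>auto simp: cut_def\<close>)
  have "(\<Sum>w\<in>S. degree K F w) + (\<Sum>w\<in>T. degree K F w) = (\<Sum>w\<in>S \<union> T. degree K F w)"
    using sum.union_disjoint[OF fin] by (rule sym)
  also have "\<dots> = 2 * (\<Sum>w\<in>S. degree K F w) + card (F \<inter> cut K (S \<union> T))"
    using sum_degree_eq[OF wf F SV(2)] sum_degree_eq[OF wf F SV(1)] unfolding inner no_inner by simp
  finally show ?thesis by simp
qed

lemma colour_class_matching_partner:
  assumes wf: "wf_graph K" and A: "colour_class K A" and pm: "perfect_matching K M"
  obtains p where "inj_on p A" "\<forall>a\<in>A. p a \<in> verts K - A \<and> (\<exists>g\<in>M. ends K g = {a, p a})"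
proof -
  have M: "M \<subseteq> edges K" using pm unfolding perfect_matching_def by blast
  have "\<forall>a\<in>A. \<exists>w. w \<in> verts K - A \<and> (\<exists>g\<in>M. ends K g = {a, w})"
  proof
    fix a assume a: "a \<in> A"
    then have "\<exists>!g. g \<in> M \<and> a \<in> ends K g"
      using pm A unfolding perfect_matching_def colour_class_def by blast
    then obtain g where g: "g \<in> M" "a \<in> ends K g" by (metis ex1_implies_ex)
    obtain a' w where "a' \<in> A" "w \<in> verts K - A" "ends K g = {a', w}"
      using colour_class_edge[OF wf A subsetD[OF M g(1)]] .
    then show "\<exists>w. w \<in> verts K - A \<and> (\<exists>g\<in>M. ends K g = {a, w})" using g a by auto
  qed
  then obtain p where p: "\<forall>a\<in>A. p a \<in> verts K - A \<and> (\<exists>g\<in>M. ends K g = {a, p a})"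
    by (rule bchoice[elim_format]) blast
  have "inj_on p A"
  proof (rule inj_onI)
    fix a a' assume a: "a \<in> A" "a' \<in> A" "p a = p a'"
    obtain g g' where g: "g \<in> M" "g' \<in> M" "ends K g = {a, p a}" "ends K g' = {a', p a}"
      using p a by metis
    then have "g = g'"
      using perfect_matching_unique_edge[OF pm, of "p a" g g'] p a(1) by auto
    then show "a = a'" using g p a by (auto simp: doubleton_eq_iff)
  qed
  then show ?thesis using that p by blast
qed

lemma colour_class_card_eq:
  assumes wf: "wf_graph K" and A: "colour_class K A" and pm: "perfect_matching K M"
  shows "card A = card (verts K - A)"
proof -
  have M: "M \<subseteq> edges K" using pm unfolding perfect_matching_def by blast
  have sum_one: "(\<Sum>w\<in>U. degree K M w) = card U" if "U \<subseteq> verts K" for U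
    using degree_perfect_matching[OF pm] that by (simp add: subset_iff)
  have "A \<subseteq> verts K" using A unfolding colour_class_def by blast
  then have "card A = (\<Sum>w\<in>A. degree K M w)" by (rule sum_one[symmetric])
  also have "\<dots> = card M" using sum_degree_colour_class[OF wf A M] .
  also have "\<dots> = (\<Sum>w\<in>verts K - A. degree K M w)"
    using sum_degree_colour_class[OF wf colour_class_complement[OF wf A] M] ..
  also have "\<dots> = card (verts K - A)" using sum_one[of "verts K - A"] by simp
  finally show ?thesis .
qed

lemma perfect_matching_of_colour_class_sdr:
  assumes wf: "wf_graph K" and A: "colour_class K A" and card: "card A = card (verts K - A)"
    and f: "f \<in> edges K" "ends K f = {u, v}" "u \<in> A" "v \<in> verts K - A"
    and \<sigma>: "inj_on \<sigma> (A - {u})"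
      "\<forall>a\<in>A - {u}. \<sigma> a \<in> verts K - A - {v} \<and> (a, \<sigma> a) \<in> adj K"
  obtains M where "perfect_matching K M" "f \<in> M"
proof -
  define B where "B = verts K - A"
  define ch where "ch a = (SOME g. g \<in> edges K \<and> ends K g = {a, \<sigma> a})" for a
  have ch: "ch a \<in> edges K" "ends K (ch a) = {a, \<sigma> a}" if "a \<in> A - {u}" for a
    using someI_ex[of "\<lambda>g. g \<in> edges K \<and> ends K g = {a, \<sigma> a}"] \<sigma>(2) that
    unfolding ch_def adj_def by auto
  have fin: "finite A" "finite B"
    using wf A unfolding wf_graph_def colour_class_def B_def by (auto intro: rev_finite_subset)
  have "\<sigma> ` (A - {u}) = B - {v}"
  proof (rule card_subset_eq)
    show "card (\<sigma> ` (A - {u})) = card (B - {v})"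
      using card_image[OF \<sigma>(1)] card f(3,4) fin unfolding B_def by simp
    show "\<sigma> ` (A - {u}) \<subseteq> B - {v}" using \<sigma>(2) unfolding B_def by blast
  qed (use fin in blast)
  then have covered_B: "\<exists>a\<in>A - {u}. z = \<sigma> a" if "z \<in> B - {v}" for z
    using that by blast
  define M where "M = insert f (ch ` (A - {u}))"
  have "perfect_matching K M"
  proof (rule perfect_matchingI)
    show "M \<subseteq> edges K" unfolding M_def using f(1) ch(1) by auto
    show "\<forall>z\<in>verts K. \<exists>g\<in>M. z \<in> ends K g"
    proof
      fix z assume z: "z \<in> verts K"
      consider "z \<in> {u, v}" | "z \<in> A - {u}" | "z \<in> B - {v}" using z unfolding B_def by blast
      then show "\<exists>g\<in>M. z \<in> ends K g"
      proof cases
        case 3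
        then obtain a where "a \<in> A - {u}" "z = \<sigma> a" using covered_B by blast
        then show ?thesis using ch(2) unfolding M_def by blast
      qed (use f(2) ch(2) in \<open>auto simp: M_def\<close>)
    qed
    have disj_f: "ends K f \<inter> ends K (ch a) = {}" if "a \<in> A - {u}" for a
      using f(2-4) ch(2)[OF that] \<sigma>(2) that by auto
    have disj_ch: "ends K (ch a) \<inter> ends K (ch a') = {}"
      if "a \<in> A - {u}" "a' \<in> A - {u}" "ch a \<noteq> ch a'" for a a'
    proof -
      have "\<sigma> a \<noteq> \<sigma> a'" using \<sigma>(1) that by (metis inj_on_def)
      then show ?thesis using ch(2) \<sigma>(2) that by auto
    qed
    show "\<forall>g1\<in>M. \<forall>g2\<in>M. g1 \<noteq> g2 \<longrightarrow> ends K g1 \<inter> ends K g2 = {}"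
      unfolding M_def using disj_f disj_ch by (auto simp: Int_commute)
  qed
  then show ?thesis using that unfolding M_def by blast
qed

section \<open>Deleting an edge\<close>

lemma perfect_matching_delete_edge_iff:
  "perfect_matching (delete_edge K e) M \<longleftrightarrow> perfect_matching K M \<and> e \<notin> M"
  unfolding perfect_matching_def delete_edge_def by auto

lemma colour_class_delete_edge: "colour_class K A \<Longrightarrow> colour_class (delete_edge K e) A"
  unfolding colour_class_def delete_edge_def by simp

lemma cut_reachable_delete_edge:
  assumes wf: "wf_graph K"
  shows "cut K {w \<in> verts K. (a, w) \<in> (adj (delete_edge K e))\<^sup>*} \<subseteq> {e}"
proof
  define C where "C = {w \<in> verts K. (a, w) \<in> (adj (delete_edge K e))\<^sup>*}"
  fix g assume g: "g \<in> cut K C"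
  then have gK: "g \<in> edges K" and one: "card (ends K g \<inter> C) = 1" unfolding cut_def by auto
  obtain p q where pq: "ends K g = {p, q}" "p \<noteq> q" using wf_graph_ends_doubleton[OF wf gK] .
  have "p \<in> verts K" "q \<in> verts K" using wf_graph_ends(1)[OF wf gK] pq by auto
  show "g \<in> {e}"
  proof (rule ccontr)
    assume "g \<notin> {e}"
    then have "(p, q) \<in> adj (delete_edge K e)" "(q, p) \<in> adj (delete_edge K e)"
      using gK pq unfolding adj_def delete_edge_def by auto
    then have "p \<in> C \<longleftrightarrow> q \<in> C"
      using \<open>p \<in> verts K\<close> \<open>q \<in> verts K\<close> unfolding C_def by (auto intro: rtrancl_into_rtrancl)
    then show False using one pq by (cases "p \<in> C") (auto simp: insert_absorb)
  qed
qed

text \<open>Otherwise \<open>e\<close> is the only edge leaving the component \<open>C\<close> of \<open>a\<close> in \<open>K - e\<close>, and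
  perfect matchings with and without \<open>e\<close> give \<open>|C|\<close> both parities.\<close>
lemma delete_edge_ends_reachable:
  assumes mc: "matching_covered K" and e: "e \<in> edges K" "ends K e = {a, b}"
    and M0: "perfect_matching K M0" "e \<notin> M0"
  shows "(a, b) \<in> (adj (delete_edge K e))\<^sup>*"
proof (rule ccontr)
  assume nr: "(a, b) \<notin> (adj (delete_edge K e))\<^sup>*"
  define C where "C = {w \<in> verts K. (a, w) \<in> (adj (delete_edge K e))\<^sup>*}"
  have wf: "wf_graph K" using mc unfolding matching_covered_def by blast
  have "a \<in> verts K" using wf_graph_ends(1)[OF wf e(1)] e(2) by auto
  then have "ends K e \<inter> C = {a}" using nr e(2) unfolding C_def by auto
  then have cut_C: "cut K C = {e}"
    using cut_reachable_delete_edge[OF wf, of a e] e(1) unfolding C_def cut_def by auto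
  obtain M1 where M1: "perfect_matching K M1" "e \<in> M1"
    using mc e(1) unfolding matching_covered_def by blast
  have "C \<subseteq> verts K" unfolding C_def by auto
  from perfect_matching_card_eq[OF wf M0(1) this] perfect_matching_card_eq[OF wf M1(1) this]
  show False using cut_C M0(2) M1(2) by simp presburger
qed

lemma connected_delete_edge:
  assumes mc: "matching_covered K" and e: "e \<in> edges K"
    and M0: "perfect_matching K M0" "e \<notin> M0"
  shows "connected_graph (delete_edge K e)"
proof -
  have wf: "wf_graph K" using mc unfolding matching_covered_def by blast
  obtain a b where ab: "ends K e = {a, b}" "a \<noteq> b" using wf_graph_ends_doubleton[OF wf e] .
  have ab_reach: "(a, b) \<in> (adj (delete_edge K e))\<^sup>*"
    using delete_edge_ends_reachable[OF mc e ab(1) M0] .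
  moreover have "(b, a) \<in> (adj (delete_edge K e))\<^sup>*"
    using ab_reach sym_adj by (metis rtrancl_converseI sym_conv_converse_eq)
  ultimately have "adj K \<subseteq> (adj (delete_edge K e))\<^sup>*"
  proof (intro subrelI)
    fix x y assume "(x, y) \<in> adj K"
    then obtain g where g: "g \<in> edges K" "ends K g = {x, y}" unfolding adj_def by blast
    show "(x, y) \<in> (adj (delete_edge K e))\<^sup>*"
    proof (cases "g = e")
      case True
      then have "(x, y) = (a, b) \<or> (x, y) = (b, a)" using g(2) ab by (auto simp: doubleton_eq_iff)
      then show ?thesis using ab_reach \<open>(b, a) \<in> _\<close> by blast
    next
      case False
      then have "(x, y) \<in> adj (delete_edge K e)" using g unfolding adj_def delete_edge_def by auto
      then show ?thesis by blast
    qed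
  qed
  then have "(adj K)\<^sup>* \<subseteq> (adj (delete_edge K e))\<^sup>*"
    by (metis rtrancl_idemp rtrancl_mono)
  then show ?thesis
    using mc unfolding matching_covered_def connected_graph_def delete_edge_def by auto
qed

lemma removableI:
  assumes mc: "matching_covered K" and e: "e \<in> edges K" and f0: "f0 \<in> edges K" "f0 \<noteq> e"
    and avoid: "\<And>f. f \<in> edges K \<Longrightarrow> f \<noteq> e \<Longrightarrow> \<exists>M. perfect_matching K M \<and> f \<in> M \<and> e \<notin> M"
  shows "removable K e"
proof -
  obtain M0 where "perfect_matching K M0" "e \<notin> M0" using avoid[OF f0] by blast
  then have "connected_graph (delete_edge K e)" using connected_delete_edge[OF mc e] by blast
  moreover have "\<exists>M. perfect_matching (delete_edge K e) M \<and> f \<in> M"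
    if "f \<in> edges (delete_edge K e)" for f
  proof -
    have "f \<in> edges K" "f \<noteq> e" using that by (simp_all add: delete_edge_def)
    then obtain M where "perfect_matching K M" "f \<in> M" "e \<notin> M" using avoid by blast
    then show ?thesis by (auto simp: perfect_matching_delete_edge_iff)
  qed
  moreover have "wf_graph (delete_edge K e)" "card (verts (delete_edge K e)) \<ge> 2"
    using mc unfolding matching_covered_def wf_graph_def delete_edge_def by auto
  ultimately show ?thesis unfolding removable_def matching_covered_def by blast
qed

section \<open>Contractions and bricks\<close>

lemma contract_simps:
  "verts (contract G X) = Some ` (verts G - X) \<union> {None}"
  "edges (contract G X) = {e \<in> edges G. \<not> ends G e \<subseteq> X}"
  "ends (contract G X) e = (\<lambda>v. if v \<in> X then None else Some v) ` ends G e"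
  by (simp_all add: contract_def)

lemma brick_wf_graph: "brick K \<Longrightarrow> wf_graph K"
  unfolding brick_def matching_covered_def by blast

lemma bipartite_contract_singleton_complement:
  assumes wf: "wf_graph G" and c1: "card (verts G - X) = 1"
  shows "bipartite (contract G X)"
proof -
  obtain z where z: "verts G - X = {z}" using c1 card_1_singletonE by blast
  have "card (ends (contract G X) e \<inter> {None}) = 1" if e: "e \<in> edges (contract G X)" for e
  proof -
    have eG: "e \<in> edges G" "\<not> ends G e \<subseteq> X" using e by (auto simp: contract_simps)
    obtain a b where ab: "ends G e = {a, b}" "a \<noteq> b" using wf_graph_ends_doubleton[OF wf eG(1)] .
    have "a \<in> verts G" "b \<in> verts G" using wf_graph_ends(1)[OF wf eG(1)] ab by auto
    then have "a \<in> X \<or> b \<in> X" using z ab(2) by (metis DiffI empty_iff insert_iff)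
    then have "None \<in> ends (contract G X) e" using ab by (auto simp: contract_simps)
    then show ?thesis by (simp add: Int_absorb1)
  qed
  then have "colour_class (contract G X) {None}" unfolding colour_class_def by (simp add: contract_simps)
  then show ?thesis unfolding bipartite_iff_colour_class by blast
qed

lemma brick_contract_card_neq_1:
  assumes "brick (contract G X)" "wf_graph G"
  shows "card (verts G - X) \<noteq> 1"
  using assms bipartite_contract_singleton_complement unfolding brick_def by blast

lemma brick_contract_odd:
  assumes br: "brick (contract G X)" and wf: "wf_graph G"
  shows "odd (card (verts G - X))"
proof -
  obtain M where "perfect_matching (contract G X) M"
    using br unfolding brick_def by (meson matching_covered_has_perfect_matching)
  then have "even (card (verts (contract G X)))"
    using perfect_matching_even_verts brick_wf_graph[OF br] by blast
  moreover have "finite (verts G - X)" using wf unfolding wf_graph_def by auto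
  then have "card (verts (contract G X)) = card (verts G - X) + 1"
    unfolding contract_simps by (simp add: card_image)
  ultimately show ?thesis by simp
qed

lemma brick_tight_cut_trivial:
  "brick K \<Longrightarrow> U \<subseteq> verts K \<Longrightarrow> tight_cut K U \<Longrightarrow> trivial_cut K U"
  unfolding brick_def by blast

lemma brick_contractions_cut_not_tight:
  assumes brick_G: "brick G" and X: "X \<subseteq> verts G" and Y: "Y \<subseteq> verts G"
    and Y_ne: "verts G - Y \<noteq> {}" and disjoint: "(verts G - X) \<inter> (verts G - Y) = {}"
    and brick_X: "brick (contract G X)" and brick_Y: "brick (contract G Y)"
  shows "\<not> tight_cut G (verts G - X)"
proof
  assume "tight_cut G (verts G - X)"
  then have "trivial_cut G (verts G - X)" using brick_tight_cut_trivial[OF brick_G] by blast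
  then have "card (verts G - X) = 1 \<or> card X = 1"
    using X unfolding trivial_cut_def by (simp add: double_diff)
  then have "card X = 1" using brick_contract_card_neq_1[OF brick_X brick_wf_graph[OF brick_G]] by simp
  moreover have "verts G - Y \<subseteq> X" using disjoint Y by blast
  ultimately have "verts G - Y = X" using Y_ne by (metis card_1_singletonE subset_singletonD)
  then show False
    using \<open>card X = 1\<close> brick_contract_card_neq_1[OF brick_Y brick_wf_graph[OF brick_G]] by simp
qed

section \<open>The bipartite double contraction\<close>

locale bipartite_double_contraction =
  fixes G :: "('v, 'e) mgraph" and X Y :: "'v set"
  assumes brick_G: "brick G"
    and X: "X \<subseteq> verts G" and Y: "Y \<subseteq> verts G"
    and X_ne: "verts G - X \<noteq> {}" and Y_ne: "verts G - Y \<noteq> {}"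
    and disjoint: "(verts G - X) \<inter> (verts G - Y) = {}"
    and brick_X: "brick (contract G X)" and brick_Y: "brick (contract G Y)"
    and bipartite_H: "bipartite (contract (contract G (verts G - X)) (Some ` (verts G - Y)))"
    and matching_covered_H:
      "matching_covered (contract (contract G (verts G - X)) (Some ` (verts G - Y)))"
begin

text \<open>\<open>Xb\<close>, \<open>Yb\<close> are the paper's \<open>X\<close>-bar, \<open>Y\<close>-bar, and \<open>xb\<close>, \<open>yb\<close> the vertices of \<open>H\<close> they
  are contracted to; the remaining vertices of \<open>H\<close> are \<open>Some (Some v)\<close> for \<open>v \<in> X \<inter> Y\<close>.\<close>
definition H :: "('v option option, 'e) mgraph" where
  "H = contract (contract G (verts G - X)) (Some ` (verts G - Y))"
definition Xb :: "'v set" where "Xb = verts G - X"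
definition Yb :: "'v set" where "Yb = verts G - Y"

abbreviation "xb \<equiv> (Some None :: 'v option option)"
abbreviation "yb \<equiv> (None :: 'v option option)"

definition proj :: "'v \<Rightarrow> 'v option option" where
  "proj v = (if v \<in> Xb then xb else if v \<in> Yb then yb else Some (Some v))"

definition lift :: "'v option option set \<Rightarrow> 'v set" where
  "lift U = {v \<in> verts G. proj v \<in> U}"

lemma wf_G: "wf_graph G" using brick_wf_graph[OF brick_G] .

lemma finite_G: "finite (verts G)" "finite (edges G)" using wf_G unfolding wf_graph_def by auto

lemma Xb_subset: "Xb \<subseteq> verts G" and Yb_subset: "Yb \<subseteq> verts G" and Xb_Yb_disjoint: "Xb \<inter> Yb = {}"
  using disjoint unfolding Xb_def Yb_def by auto

lemma H_matching_covered: "matching_covered H" using matching_covered_H unfolding H_def .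

lemma wf_H: "wf_graph H" using H_matching_covered unfolding matching_covered_def by blast

lemma finite_H: "finite (verts H)" "finite (edges H)" using wf_H unfolding wf_graph_def by auto

lemma verts_H: "verts H = {xb, yb} \<union> Some ` Some ` (X \<inter> Y)"
proof -
  have "verts G - (verts G - X) = X" using X by auto
  moreover have "Some ` X \<union> {None} - Some ` (verts G - Y) = Some ` (X \<inter> Y) \<union> {None}" using X by auto
  ultimately show ?thesis unfolding H_def contract_simps by auto
qed

lemma edges_H: "edges H = {g \<in> edges G. \<not> ends G g \<subseteq> Xb \<and> \<not> ends G g \<subseteq> Yb}"
proof -
  have "(\<lambda>v. if v \<in> Xb then None else Some v) ` ends G g \<subseteq> Some ` Yb \<longleftrightarrow> ends G g \<subseteq> Yb"
    if "\<not> ends G g \<subseteq> Xb" for g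
  proof
    assume "(\<lambda>v. if v \<in> Xb then None else Some v) ` ends G g \<subseteq> Some ` Yb"
    then have "(if v \<in> Xb then None else Some v) \<in> Some ` Yb" if "v \<in> ends G g" for v
      using that by blast
    then show "ends G g \<subseteq> Yb" by (metis (full_types) image_iff option.distinct(1) option.inject subsetI)
  qed (use Xb_Yb_disjoint in auto)
  then show ?thesis unfolding H_def contract_simps Xb_def[symmetric] Yb_def[symmetric]
    by (intro set_eqI) (simp only: mem_Collect_eq, blast)
qed

lemma ends_H: "ends H g = proj ` ends G g"
  unfolding H_def contract_simps Xb_def[symmetric] Yb_def[symmetric] image_image proj_def
  using Xb_Yb_disjoint by (intro image_cong) auto

lemma xb_in_H: "xb \<in> verts H" and yb_in_H: "yb \<in> verts H" unfolding verts_H by auto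

lemma proj_in_verts_H: "v \<in> verts G \<Longrightarrow> proj v \<in> verts H"
  unfolding verts_H proj_def Xb_def Yb_def by auto

lemma proj_surj: "w \<in> verts H \<Longrightarrow> \<exists>v\<in>verts G. proj v = w"
proof -
  assume w: "w \<in> verts H"
  obtain a b where a: "a \<in> Xb" and b: "b \<in> Yb" using X_ne Y_ne unfolding Xb_def Yb_def by auto
  consider "w = xb" | "w = yb" | v where "v \<in> X \<inter> Y" "w = Some (Some v)"
    using w unfolding verts_H by auto
  then show ?thesis
  proof cases
    case 1
    then show ?thesis using a Xb_subset unfolding proj_def by auto
  next
    case 2
    then show ?thesis using b Yb_subset Xb_Yb_disjoint unfolding proj_def by auto
  next
    case 3
    then show ?thesis using X unfolding proj_def Xb_def Yb_def by auto
  qed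
qed

lemma proj_eq_mid_iff: "v \<in> X \<inter> Y \<Longrightarrow> proj u = Some (Some v) \<longleftrightarrow> u = v"
  unfolding proj_def Xb_def Yb_def using X by auto

lemma mid_in_ends_H_iff:
  assumes "v \<in> X \<inter> Y"
  shows "Some (Some v) \<in> ends H g \<longleftrightarrow> v \<in> ends G g"
  using proj_eq_mid_iff[OF assms] unfolding ends_H by force

lemma cut_lift:
  assumes U: "U \<subseteq> verts H"
  shows "cut G (lift U) = cut H U"
proof -
  have "g \<in> cut G (lift U) \<longleftrightarrow> g \<in> cut H U" if gG: "g \<in> edges G" for g
  proof -
    obtain a b where ab: "ends G g = {a, b}" "a \<noteq> b" using wf_graph_ends_doubleton[OF wf_G gG] .
    have abV: "a \<in> verts G" "b \<in> verts G" using wf_graph_ends(1)[OF wf_G gG] ab by auto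
    show ?thesis
    proof (cases "proj a = proj b")
      case True
      then have "ends G g \<subseteq> Xb \<or> ends G g \<subseteq> Yb"
        using ab unfolding proj_def by (auto split: if_splits)
      then have "g \<notin> cut H U" unfolding cut_def edges_H by auto
      moreover have "ends G g \<inter> lift U = {a, b} \<or> ends G g \<inter> lift U = {}"
        using True abV unfolding ab lift_def by auto
      ultimately show ?thesis using ab(2) unfolding cut_def by auto
    next
      case False
      moreover have "a \<in> Xb \<Longrightarrow> b \<in> Xb \<Longrightarrow> proj a = proj b"
        and "a \<in> Yb \<Longrightarrow> b \<in> Yb \<Longrightarrow> proj a = proj b"
        using Xb_Yb_disjoint unfolding proj_def by auto
      ultimately have "\<not> ends G g \<subseteq> Xb" "\<not> ends G g \<subseteq> Yb" unfolding ab by auto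
      then have gH: "g \<in> edges H" using gG unfolding edges_H by auto
      have "ends H g \<inter> U = proj ` (ends G g \<inter> lift U)"
        unfolding ends_H lift_def using abV ab by auto
      moreover have "inj_on proj (ends G g \<inter> lift U)" using False ab by (auto intro!: inj_onI)
      ultimately have "card (ends H g \<inter> U) = card (ends G g \<inter> lift U)" by (simp add: card_image)
      then show ?thesis unfolding cut_def using gG gH by auto
    qed
  qed
  moreover have "cut G (lift U) \<subseteq> edges G" "cut H U \<subseteq> edges G"
    unfolding cut_def edges_H by auto
  ultimately show ?thesis by blast
qed

lemma card_le_card_lift:
  assumes "U \<subseteq> verts H"
  shows "card U \<le> card (lift U)"
proof -
  have "U \<subseteq> proj ` lift U" using proj_surj assms unfolding lift_def by fastforce
  moreover have "finite (lift U)" using finite_G unfolding lift_def by auto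
  ultimately show ?thesis by (meson card_image_le card_mono finite_imageI le_trans)
qed

lemma lift_xb: "lift {xb} = Xb" unfolding lift_def proj_def using Xb_subset by auto
lemma lift_yb: "lift {yb} = Yb" unfolding lift_def proj_def using Yb_subset Xb_Yb_disjoint by auto
lemma lift_mid: "v \<in> X \<inter> Y \<Longrightarrow> lift {Some (Some v)} = {v}"
  unfolding lift_def proj_def Xb_def Yb_def using X by auto
lemma lift_complement: "verts G - lift U = lift (verts H - U)"
  unfolding lift_def using proj_in_verts_H by auto

lemma card_perfect_matching_cut_singleton:
  assumes pm: "perfect_matching G M" and v: "v \<in> verts G"
  shows "card (M \<inter> cut G {v}) = 1"
  using perfect_matching_card_eq[OF wf_G pm, of "{v}"] v by simp

lemma degree_H:
  assumes pm: "perfect_matching G M" and w: "w \<in> verts H"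
  shows "degree H (M \<inter> edges H) w =
    (if w = xb then card (M \<inter> cut G Xb) else if w = yb then card (M \<inter> cut G Yb) else 1)"
proof -
  have "{w} \<subseteq> verts H" using w by simp
  then have "M \<inter> cut G (lift {w}) = {g \<in> M \<inter> edges H. w \<in> ends H g}"
    using cut_lift[of "{w}"] cut_singleton[of H w] by blast
  then have "degree H (M \<inter> edges H) w = card (M \<inter> cut G (lift {w}))"
    unfolding degree_def by simp
  moreover have "w = Some (Some v) \<Longrightarrow> v \<in> X \<inter> Y \<Longrightarrow> card (M \<inter> cut G {v}) = 1" for v
    using card_perfect_matching_cut_singleton[OF pm] X by blast
  ultimately show ?thesis using w lift_xb lift_yb lift_mid unfolding verts_H by auto
qed

lemma sum_degree_H:
  assumes pm: "perfect_matching G M" and W: "W \<subseteq> verts H"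
  shows "(\<Sum>w\<in>W. degree H (M \<inter> edges H) w) = card (W - {xb, yb})
    + (if xb \<in> W then card (M \<inter> cut G Xb) else 0) + (if yb \<in> W then card (M \<inter> cut G Yb) else 0)"
proof -
  have fW: "finite W" using W finite_H by (blast intro: rev_finite_subset)
  have "(\<Sum>w\<in>W - {xb, yb}. degree H (M \<inter> edges H) w) = (\<Sum>w\<in>W - {xb, yb}. 1)"
  proof (rule sum.cong[OF refl])
    fix w assume "w \<in> W - {xb, yb}"
    then show "degree H (M \<inter> edges H) w = 1" using degree_H[OF pm, of w] W by auto
  qed
  also have "\<dots> = card (W - {xb, yb})" by simp
  moreover have "(\<Sum>w\<in>W \<inter> {xb, yb}. degree H (M \<inter> edges H) w) =
      (if xb \<in> W then card (M \<inter> cut G Xb) else 0) + (if yb \<in> W then card (M \<inter> cut G Yb) else 0)"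
    using degree_H[OF pm] W xb_in_H yb_in_H by (cases "xb \<in> W"; cases "yb \<in> W") (auto simp: Int_insert_right)
  ultimately show ?thesis
    using sum.Int_Diff[OF fW, of "degree H (M \<inter> edges H)" "{xb, yb}"] by linarith
qed

lemma Xb_not_tight: "\<not> tight_cut G Xb"
  using brick_contractions_cut_not_tight[OF brick_G X Y Y_ne disjoint brick_X brick_Y]
  unfolding Xb_def .

lemma Yb_not_tight: "\<not> tight_cut G Yb"
  using brick_contractions_cut_not_tight[OF brick_G Y X X_ne _ brick_Y brick_X] disjoint
  unfolding Yb_def by (simp add: Int_commute)

lemma odd_card_cut_Xb: "perfect_matching G M \<Longrightarrow> odd (card (M \<inter> cut G Xb))"
  using perfect_matching_odd_cut[OF wf_G _ Xb_subset] brick_contract_odd[OF brick_X wf_G]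
  unfolding Xb_def by blast

lemma odd_card_cut_Yb: "perfect_matching G M \<Longrightarrow> odd (card (M \<inter> cut G Yb))"
  using perfect_matching_odd_cut[OF wf_G _ Yb_subset] brick_contract_odd[OF brick_Y wf_G]
  unfolding Yb_def by blast

lemma card_Xb_ge_3: "card Xb \<ge> 3"
proof -
  have "odd (card Xb)" "card Xb \<noteq> 1"
    using brick_contract_odd[OF brick_X wf_G] brick_contract_card_neq_1[OF brick_X wf_G]
    unfolding Xb_def by auto
  moreover have "card Xb \<noteq> 0"
    using X_ne Xb_subset finite_G unfolding Xb_def by (simp add: finite_subset)
  ultimately show ?thesis by presburger
qed

definition A :: "'v option option set" where "A = (SOME A. colour_class H A \<and> xb \<in> A)"
definition B :: "'v option option set" where "B = verts H - A"

lemma colour_class_A: "colour_class H A" and xb_in_A: "xb \<in> A"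
proof -
  obtain A0 where A0: "colour_class H A0"
    using matching_covered_H bipartite_H unfolding bipartite_iff_colour_class H_def by blast
  then have "\<exists>A. colour_class H A \<and> xb \<in> A"
    using colour_class_complement[OF wf_H A0] xb_in_H by (cases "xb \<in> A0") auto
  then show "colour_class H A" "xb \<in> A" unfolding A_def by (metis (mono_tags, lifting) someI_ex)+
qed

lemma colour_class_B: "colour_class H B"
  unfolding B_def using colour_class_complement[OF wf_H colour_class_A] .

lemma A_subset: "A \<subseteq> verts H" and B_subset: "B \<subseteq> verts H"
  using colour_class_A colour_class_B unfolding colour_class_def by auto

lemma A_B_disjoint: "A \<inter> B = {}" and A_Un_B: "A \<union> B = verts H"
  using A_subset unfolding B_def by auto

lemma finite_A: "finite A" and finite_B: "finite B"
  using A_subset B_subset finite_H by (auto intro: rev_finite_subset)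

lemma card_A_eq_card_B: "card A = card B"
  using colour_class_card_eq[OF wf_H colour_class_A] H_matching_covered
    matching_covered_has_perfect_matching unfolding B_def by metis

lemma edge_H_ends:
  assumes "g \<in> edges H"
  obtains a w where "a \<in> A" "w \<in> B" "ends H g = {a, w}"
  using colour_class_edge[OF wf_H colour_class_A assms] unfolding B_def by blast

lemma sum_degree_A_eq_sum_degree_B:
  "(\<Sum>w\<in>A. degree H (M \<inter> edges H) w) = (\<Sum>w\<in>B. degree H (M \<inter> edges H) w)"
  using sum_degree_colour_class[OF wf_H colour_class_A, of "M \<inter> edges H"]
    sum_degree_colour_class[OF wf_H colour_class_B, of "M \<inter> edges H"] by simp

text \<open>If \<open>yb\<close> were on the side of \<open>xb\<close>, counting the edges of a perfect matching of \<open>G\<close> on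
  both sides of \<open>H\<close> would make \<open>\<partial>(Xb)\<close> tight.\<close>
lemma yb_in_B: "yb \<in> B"
proof (rule ccontr)
  assume "yb \<notin> B"
  then have yb_A: "yb \<in> A" using yb_in_H A_Un_B by blast
  have "card (M \<inter> cut G Xb) = 1" if pm: "perfect_matching G M" for M
  proof -
    have "xb \<notin> B" "yb \<notin> B" "{xb, yb} \<subseteq> A" using yb_A xb_in_A A_B_disjoint by auto
    then have "card (A - {xb, yb}) + card (M \<inter> cut G Xb) + card (M \<inter> cut G Yb) = card B"
      using sum_degree_A_eq_sum_degree_B[of M] sum_degree_H[OF pm A_subset]
        sum_degree_H[OF pm B_subset] xb_in_A yb_A by (simp add: insert_absorb)
    moreover have "card (A - {xb, yb}) + 2 = card A"
      using \<open>{xb, yb} \<subseteq> A\<close> finite_A card_mono[OF finite_A \<open>{xb, yb} \<subseteq> A\<close>]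
      by (simp add: card_Diff_subset)
    ultimately show ?thesis
      using card_A_eq_card_B odd_card_cut_Xb[OF pm] odd_card_cut_Yb[OF pm] by presburger
  qed
  then show False using Xb_not_tight unfolding tight_cut_def by blast
qed

lemma card_cut_Xb_eq_card_cut_Yb:
  assumes pm: "perfect_matching G M"
  shows "card (M \<inter> cut G Xb) = card (M \<inter> cut G Yb)"
proof -
  have "xb \<notin> B" "yb \<notin> A" using xb_in_A yb_in_B A_B_disjoint by auto
  then have "card (A - {xb}) + card (M \<inter> cut G Xb) = card (B - {yb}) + card (M \<inter> cut G Yb)"
    using sum_degree_A_eq_sum_degree_B[of M] sum_degree_H[OF pm A_subset]
      sum_degree_H[OF pm B_subset] xb_in_A yb_in_B by simp
  then show ?thesis
    using card_A_eq_card_B xb_in_A yb_in_B finite_A finite_B by (simp add: card_Diff_singleton)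
qed

definition closed_pair :: "'v option option set \<Rightarrow> 'v option option set \<Rightarrow> bool" where
  "closed_pair S T \<longleftrightarrow> S \<subseteq> A \<and> xb \<in> S \<and> T \<subseteq> B \<and> card T = card S + 1 \<and>
    (\<forall>g\<in>edges H. ends H g \<inter> S \<noteq> {} \<longrightarrow> ends H g \<subseteq> S \<union> T)"

text \<open>Comparing the degree sums of \<open>M \<inter> E(H)\<close> over \<open>S\<close> and over \<open>T\<close>: \<open>xb\<close> contributes
  \<open>|M \<inter> \<partial>(Xb)|\<close>, and \<open>yb\<close>, if in \<open>T\<close>, the equal number \<open>|M \<inter> \<partial>(Yb)|\<close>, which is odd.\<close>
lemma tight_cut_lift_closed_pair:
  assumes "closed_pair S T"
  shows "tight_cut G (lift (S \<union> T))"
  unfolding tight_cut_def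
proof (intro allI impI)
  fix M assume pm: "perfect_matching G M"
  define F where "F = M \<inter> edges H"
  define c where "c = card (F \<inter> cut H (S \<union> T))"
  have S: "S \<subseteq> A" "xb \<in> S" and T: "T \<subseteq> B" "card T = card S + 1"
    and closed: "\<forall>g\<in>edges H. ends H g \<inter> S \<noteq> {} \<longrightarrow> ends H g \<subseteq> S \<union> T"
    using assms unfolding closed_pair_def by auto
  have SV: "S \<subseteq> verts H" and TV: "T \<subseteq> verts H" using S T A_subset B_subset by auto
  have fin: "finite S" "finite T" using SV TV finite_H by (auto intro: rev_finite_subset)
  have sums: "(\<Sum>w\<in>T. degree H F w) = (\<Sum>w\<in>S. degree H F w) + c"
    using sum_degree_closed_pair[OF wf_H colour_class_A _ S(1) _ closed] T(1)
    unfolding c_def F_def B_def by blast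
  have "yb \<notin> S" "xb \<notin> T" using S T xb_in_A yb_in_B A_B_disjoint by auto
  moreover have "0 < card S" using S(2) fin(1) by (auto simp: card_gt_0_iff)
  ultimately have sum_S: "(\<Sum>w\<in>S. degree H F w) + 1 = card S + card (M \<inter> cut G Xb)"
    using sum_degree_H[OF pm SV] S(2) fin(1) unfolding F_def by (simp add: card_Diff_singleton)
  have "c = 1"
  proof (cases "yb \<in> T")
    case True
    then have "(\<Sum>w\<in>T. degree H F w) + 1 = card T + card (M \<inter> cut G Yb)"
      using sum_degree_H[OF pm TV] \<open>xb \<notin> T\<close> fin(2) T(2) unfolding F_def
      by (simp add: card_Diff_singleton)
    then show ?thesis using sums sum_S T(2) card_cut_Xb_eq_card_cut_Yb[OF pm] by simp
  next
    case False
    then have "(\<Sum>w\<in>T. degree H F w) = card T"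
      using sum_degree_H[OF pm TV] \<open>xb \<notin> T\<close> unfolding F_def by simp
    then show ?thesis using sums sum_S T(2) odd_card_cut_Xb[OF pm] by presburger
  qed
  moreover have "M \<inter> cut G (lift (S \<union> T)) = F \<inter> cut H (S \<union> T)"
    using cut_lift[of "S \<union> T"] SV TV unfolding F_def cut_def by auto
  ultimately show "card (M \<inter> cut G (lift (S \<union> T))) = 1" unfolding c_def by simp
qed

lemma closed_pair_complement:
  assumes "closed_pair S T"
  obtains w where "w \<in> X \<inter> Y" "verts H - (S \<union> T) = {Some (Some w)}"
proof -
  define R where "R = verts H - (S \<union> T)"
  have S: "S \<subseteq> A" "xb \<in> S" and T: "T \<subseteq> B" "card T = card S + 1"
    using assms unfolding closed_pair_def by auto
  have UV: "S \<union> T \<subseteq> verts H" using S T A_subset B_subset by auto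
  have "lift (S \<union> T) \<subseteq> verts G" unfolding lift_def by auto
  then have "trivial_cut G (lift (S \<union> T))"
    using brick_tight_cut_trivial[OF brick_G] tight_cut_lift_closed_pair[OF assms] by blast
  then have triv: "card (lift (S \<union> T)) = 1 \<or> card (lift R) = 1"
    unfolding trivial_cut_def lift_complement R_def .
  have "finite S" "finite T" "S \<inter> T = {}"
    using S T finite_A finite_B A_B_disjoint by (auto intro: rev_finite_subset)
  moreover have "0 < card S" using S(2) \<open>finite S\<close> by (auto simp: card_gt_0_iff)
  ultimately have "card (S \<union> T) \<ge> 3" using T(2) by (simp add: card_Un_disjoint)
  then have "card (lift R) = 1" using triv card_le_card_lift[OF UV] by linarith
  moreover have "R \<subseteq> verts H" unfolding R_def by auto
  moreover have "finite R" using finite_H unfolding R_def by auto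
  moreover have "R \<noteq> {}" using \<open>card (lift R) = 1\<close> unfolding lift_def by auto
  ultimately have "card R = 1"
    using card_le_card_lift[of R] by (simp add: card_gt_0_iff le_Suc_eq)
  then obtain w where w: "R = {w}" by (rule card_1_singletonE)
  then have "w \<noteq> xb" using S(2) unfolding R_def by auto
  moreover have "w \<noteq> yb"
    using w \<open>card (lift R) = 1\<close> lift_yb brick_contract_card_neq_1[OF brick_Y wf_G]
    unfolding Yb_def by auto
  moreover have "w \<in> verts H" using w unfolding R_def by auto
  ultimately show ?thesis using that w unfolding R_def verts_H by auto
qed

lemma closed_pair_A_eq:
  assumes "closed_pair S T" and z: "verts H - (S \<union> T) = {z}"
  shows "A = insert z S"
proof -
  have S: "S \<subseteq> A" and T: "T \<subseteq> B" "card T = card S + 1"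
    using assms(1) unfolding closed_pair_def by auto
  have fin: "finite S" "finite T" and disj: "S \<inter> T = {}"
    using S T(1) finite_A finite_B A_B_disjoint by (auto intro: rev_finite_subset)
  have "S \<union> T \<subseteq> verts H" using S T(1) A_subset B_subset by auto
  then have V: "verts H = insert z (S \<union> T)" "z \<notin> S \<union> T" using z by auto
  then have "card A + card B = card S + card T + 1"
    using fin disj A_Un_B A_B_disjoint finite_A finite_B
    by (metis card_Un_disjoint card_insert_disjoint finite_UnI Suc_eq_plus1)
  then have "card B = card T" using card_A_eq_card_B T(2) by simp
  then have "B = T" using card_subset_eq[OF finite_B T(1)] by simp
  then show ?thesis using V A_Un_B A_B_disjoint disj S by auto
qed

lemma cut_Yb_eq: "cut G Yb = {g \<in> edges H. yb \<in> ends H g}"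
  using cut_lift[of "{yb}"] yb_in_H lift_yb cut_singleton[of H yb] by simp

lemma cut_Xb_eq: "cut G Xb = {g \<in> edges H. xb \<in> ends H g}"
  using cut_lift[of "{xb}"] xb_in_H lift_xb cut_singleton[of H xb] by simp

lemma edges_at_yb_not_confined:
  assumes w: "w \<in> X \<inter> Y"
    and confined: "\<forall>g\<in>edges H. yb \<in> ends H g \<longrightarrow> g = e \<or> ends H g = {Some (Some w), yb}"
  shows False
proof -
  have "card (M \<inter> cut G Yb) = 1" if pm: "perfect_matching G M" for M
  proof -
    have "w \<in> verts G" using w X by auto
    have "M \<inter> cut G Yb \<subseteq> {e} \<union> (M \<inter> cut G {w})"
    proof
      fix g assume g: "g \<in> M \<inter> cut G Yb"
      then have "g \<in> edges H" "yb \<in> ends H g" unfolding cut_Yb_eq by auto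
      then have "g = e \<or> w \<in> ends G g" using confined mid_in_ends_H_iff[OF w] by auto
      moreover have "g \<in> edges G" using \<open>g \<in> edges H\<close> unfolding edges_H by auto
      ultimately show "g \<in> {e} \<union> (M \<inter> cut G {w})" using g unfolding cut_singleton by auto
    qed
    moreover have "finite (M \<inter> cut G {w})" using finite_G unfolding cut_def by auto
    ultimately have "card (M \<inter> cut G Yb) \<le> card ({e} \<union> (M \<inter> cut G {w}))"
      by (intro card_mono) auto
    also have "\<dots> \<le> card {e} + card (M \<inter> cut G {w})" by (rule card_Un_le)
    finally have "card (M \<inter> cut G Yb) \<le> 2"
      using card_perfect_matching_cut_singleton[OF pm \<open>w \<in> verts G\<close>] by simp
    then show ?thesis using odd_card_cut_Yb[OF pm] by presburger
  qed
  then show False using Yb_not_tight unfolding tight_cut_def by blast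
qed

text \<open>\<open>{p, b, w}\<close>, with \<open>p \<in> Xb\<close> the other end of \<open>e\<close>, would be a nontrivial tight cut of
  \<open>G\<close>: every perfect matching covers \<open>b\<close> by an edge inside it.\<close>
lemma edges_at_mid_not_confined:
  assumes e: "e \<in> edges H" "ends H e = {xb, Some (Some b)}"
    and b: "b \<in> X \<inter> Y" and w: "w \<in> X \<inter> Y" "b \<noteq> w"
    and confined: "\<forall>g\<in>edges H. Some (Some b) \<in> ends H g \<longrightarrow>
      g = e \<or> ends H g = {Some (Some w), Some (Some b)}"
  shows False
proof -
  have eG: "e \<in> edges G" using e(1) unfolding edges_H by auto
  obtain p where p: "p \<in> ends G e" "proj p = xb" using e(2) unfolding ends_H by (metis imageE insertI1)
  have p_Xb: "p \<in> Xb" using p(2) unfolding proj_def by (auto split: if_splits)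
  have b_e: "b \<in> ends G e" using mid_in_ends_H_iff[OF b] e(2) by auto
  have bw_notin: "b \<notin> Xb" "w \<notin> Xb" using b w unfolding Xb_def by auto
  define Q where "Q = {p, b, w}"
  have QV: "Q \<subseteq> verts G" using b w X p_Xb Xb_subset unfolding Q_def by auto
  have "p \<noteq> b" "p \<noteq> w" using p_Xb bw_notin by auto
  then have card_Q: "card Q = 3" using w(2) unfolding Q_def by simp
  have at_b: "ends G g \<subseteq> Q" if g: "g \<in> edges G" "b \<in> ends G g" for g
  proof -
    have "g \<in> edges H" unfolding edges_H using g b unfolding Xb_def Yb_def by auto
    then have "g = e \<or> ends H g = {Some (Some w), Some (Some b)}"
      using confined mid_in_ends_H_iff[OF b] g(2) by blast
    then show ?thesis
    proof
      assume "g = e"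
      then show ?thesis
        using card_2_eq_doubleton[OF wf_graph_ends(2)[OF wf_G eG] p(1) b_e] p_Xb bw_notin
        unfolding Q_def by auto
    next
      assume "ends H g = {Some (Some w), Some (Some b)}"
      then have "w \<in> ends G g" using mid_in_ends_H_iff[OF w(1)] by auto
      then show ?thesis
        using card_2_eq_doubleton[OF wf_graph_ends(2)[OF wf_G g(1)] _ g(2)] w(2) unfolding Q_def by auto
    qed
  qed
  have "tight_cut G Q"
    using tight_cut_three_vertices[OF wf_G QV card_Q] at_b unfolding Q_def by blast
  moreover have "card (verts G - Q) \<noteq> 1"
  proof -
    have "Xb - {p} \<subseteq> verts G - Q" using Xb_subset bw_notin unfolding Q_def by auto
    moreover have "card (Xb - {p}) \<ge> 2" using card_Xb_ge_3 p_Xb by simp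
    moreover have "finite (verts G - Q)" using finite_G by simp
    ultimately show ?thesis using card_mono[of "verts G - Q" "Xb - {p}"] by linarith
  qed
  ultimately show False using brick_G QV card_Q unfolding brick_def trivial_cut_def by auto
qed

lemma edges_at_partner_not_confined:
  assumes e: "e \<in> edges H" "ends H e = {xb, b}" and b: "b \<in> B"
    and w: "w \<in> X \<inter> Y" "Some (Some w) \<in> A"
    and confined: "\<forall>g\<in>edges H. b \<in> ends H g \<longrightarrow> g = e \<or> ends H g = {Some (Some w), b}"
  shows False
proof (cases "b = yb")
  case True
  then show False using edges_at_yb_not_confined[OF w(1)] confined by blast
next
  case False
  moreover have "b \<noteq> xb" "b \<in> verts H" using b xb_in_A A_B_disjoint B_subset by auto
  ultimately obtain b' where b': "b' \<in> X \<inter> Y" "b = Some (Some b')" unfolding verts_H by auto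
  then have "b' \<noteq> w" using b w(2) A_B_disjoint by auto
  then show False using edges_at_mid_not_confined[OF e(1) _ b'(1) w(1)] e(2) b' confined by auto
qed

definition neighbours_avoiding :: "'e \<Rightarrow> 'v option option \<Rightarrow> 'v option option \<Rightarrow> 'v option option set"
  where "neighbours_avoiding e v a = {w \<in> B - {v}. (a, w) \<in> adj (delete_edge H e)}"

lemma adj_delete_edge_iff: "(a, w) \<in> adj (delete_edge H e) \<longleftrightarrow> (\<exists>g\<in>edges H - {e}. ends H g = {a, w})"
  unfolding adj_def delete_edge_def by simp

text \<open>Matching each vertex of a Hall-deficient \<open>S\<close> to its partner in a perfect matching of \<open>H\<close>
  through \<open>f = uv\<close>: the partners avoid \<open>v\<close> and are neighbours in \<open>H - e\<close>, except that
  \<open>xb \<in> S\<close> may be matched to \<open>b\<close> through \<open>e\<close> itself, which the deficiency forces.\<close>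
lemma hall_deficiency:
  assumes e: "ends H e = {xb, b}"
    and f: "ends H f = {u, v}" "u \<in> A" "v \<in> B"
    and M: "perfect_matching H M" "f \<in> M"
    and S: "S \<subseteq> A - {u}" and deficient: "card (\<Union>(neighbours_avoiding e v ` S)) < card S"
  shows "xb \<in> S" "b \<noteq> v" "b \<notin> \<Union>(neighbours_avoiding e v ` S)"
    "card (\<Union>(neighbours_avoiding e v ` S)) + 1 = card S"
proof -
  define N where "N = \<Union>(neighbours_avoiding e v ` S)"
  have fin: "finite N"
    using finite_B unfolding N_def neighbours_avoiding_def by (auto intro: rev_finite_subset)
  have M_edges: "M \<subseteq> edges H" using M unfolding perfect_matching_def by blast
  obtain p where p_inj: "inj_on p A"
    and p: "\<forall>a\<in>A. p a \<in> B \<and> (\<exists>g\<in>M. ends H g = {a, p a})"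
    using colour_class_matching_partner[OF wf_H colour_class_A M(1)] unfolding B_def by blast
  have S_A: "a \<in> A" "a \<notin> B" "a \<noteq> u" if "a \<in> S" for a using that S A_B_disjoint by auto
  have "inj_on p S" using p_inj S by (auto intro: inj_on_subset)
  have p_cases: "p a \<in> N \<or> (a = xb \<and> p a = b \<and> b \<noteq> v)" if a: "a \<in> S" for a
  proof -
    obtain g where g: "g \<in> M" "ends H g = {a, p a}" using p S_A(1)[OF a] by blast
    have "p a \<noteq> v"
    proof
      assume "p a = v"
      then have "g = f"
        using perfect_matching_unique_edge[OF M(1), of v g f] g M(2) f(1) f(3) B_subset by auto
      then have "{a, p a} = {u, v}" using g f(1) by simp
      moreover have "a \<notin> B" "a \<noteq> u" using S_A[OF a] by auto
      ultimately show False using f(3) by (metis doubleton_eq_iff)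
    qed
    show ?thesis
    proof (cases "g = e")
      case True
      then have "{a, p a} = {xb, b}" using g e by simp
      moreover have "p a \<in> B" "a \<notin> B" "xb \<notin> B" using p S_A[OF a] xb_in_A A_B_disjoint by auto
      ultimately have "a = xb" "p a = b" by (metis doubleton_eq_iff)+
      then show ?thesis using \<open>p a \<noteq> v\<close> by simp
    next
      case False
      then have "p a \<in> neighbours_avoiding e v a"
        using g M_edges p S_A(1)[OF a] \<open>p a \<noteq> v\<close>
        unfolding neighbours_avoiding_def adj_delete_edge_iff by auto
      then show ?thesis unfolding N_def using a by blast
    qed
  qed
  have "p ` S \<subseteq> insert b N" using p_cases by blast
  note pigeonhole = card_inj_image_subset_insert[OF \<open>inj_on p S\<close> this fin deficient[folded N_def]]
  then obtain a where "a \<in> S" "p a = b" by blast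
  then show "xb \<in> S" "b \<noteq> v" using p_cases pigeonhole(1) by auto
  show "b \<notin> \<Union>(neighbours_avoiding e v ` S)" "card (\<Union>(neighbours_avoiding e v ` S)) + 1 = card S"
    using pigeonhole unfolding N_def by auto
qed

lemma hall_deficient_closed_pair:
  assumes e: "ends H e = {xb, b}" "b \<in> B"
    and f: "f \<in> edges H" "ends H f = {u, v}" "u \<in> A" "v \<in> B"
    and S: "S \<subseteq> A - {u}" and deficient: "card (\<Union>(neighbours_avoiding e v ` S)) < card S"
  obtains T where "closed_pair S T" "\<forall>g\<in>edges H - {e}. b \<in> ends H g \<longrightarrow> ends H g \<inter> S = {}"
proof -
  define N where "N = \<Union>(neighbours_avoiding e v ` S)"
  obtain M where M: "perfect_matching H M" "f \<in> M"
    using H_matching_covered f(1) unfolding matching_covered_def by blast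
  note deficiency = hall_deficiency[OF e(1) f(2-4) M S deficient, folded N_def]
  have N_B: "N \<subseteq> B - {v}" "finite N"
    unfolding N_def neighbours_avoiding_def using finite_B by (auto intro: rev_finite_subset)
  define T where "T = insert v (insert b N)"
  have S_A: "S \<subseteq> A" using S by auto
  have "v \<notin> N" using N_B by auto
  then have T: "T \<subseteq> B" "card T = card S + 1"
    unfolding T_def using N_B e(2) f(4) deficiency by auto
  have in_N: "w \<in> N" if "g \<in> edges H - {e}" "ends H g = {a, w}" "a \<in> S" "w \<in> B - {v}" for g a w
    using that unfolding N_def neighbours_avoiding_def adj_delete_edge_iff by blast
  have "\<forall>g\<in>edges H. ends H g \<inter> S \<noteq> {} \<longrightarrow> ends H g \<subseteq> S \<union> T"
  proof (intro ballI impI)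
    fix g assume g: "g \<in> edges H" "ends H g \<inter> S \<noteq> {}"
    obtain a w where aw: "a \<in> A" "w \<in> B" "ends H g = {a, w}" using edge_H_ends[OF g(1)] .
    then have "a \<in> S" using g(2) S_A A_B_disjoint by auto
    moreover have "w \<in> T"
    proof (cases "g = e \<or> w = v")
      case True
      then show ?thesis using aw e(1) xb_in_A A_B_disjoint unfolding T_def
        by (auto simp: doubleton_eq_iff)
    qed (use in_N[of g a w] aw g(1) \<open>a \<in> S\<close> in \<open>auto simp: T_def\<close>)
    ultimately show "ends H g \<subseteq> S \<union> T" using aw by auto
  qed
  then have "closed_pair S T" unfolding closed_pair_def using S_A deficiency(1) T by blast
  moreover have "ends H g \<inter> S = {}" if g: "g \<in> edges H - {e}" "b \<in> ends H g" for g
  proof -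
    obtain a w where aw: "a \<in> A" "w \<in> B" "ends H g = {a, w}" using edge_H_ends g(1) by blast
    then have "w = b" using g(2) e(2) A_B_disjoint by auto
    then have "a \<notin> S" using in_N[of g a b] deficiency(2,3) aw g(1) e(2) by blast
    then show ?thesis using aw \<open>w = b\<close> e(2) S_A A_B_disjoint by auto
  qed
  ultimately show ?thesis using that by blast
qed

text \<open>A Hall-deficient set would lead to a nontrivial tight cut of \<open>G\<close>, except when \<open>H\<close> has a
  single vertex \<open>z\<close> outside the closed pair; but then every edge at \<open>b\<close> other than \<open>e\<close> ends
  in \<open>z\<close>.\<close>
lemma hall_condition_avoiding:
  assumes e: "e \<in> edges H" "ends H e = {xb, b}" "b \<in> B"
    and f: "f \<in> edges H" "ends H f = {u, v}" "u \<in> A" "v \<in> B"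
  shows "hall_condition (A - {u}) (neighbours_avoiding e v)"
proof (rule ccontr)
  assume "\<not> hall_condition (A - {u}) (neighbours_avoiding e v)"
  then obtain S where "S \<subseteq> A - {u}" "card (\<Union>(neighbours_avoiding e v ` S)) < card S"
    unfolding hall_condition_def by (meson not_le)
  then obtain T where T: "closed_pair S T"
    and b_avoids_S: "\<forall>g\<in>edges H - {e}. b \<in> ends H g \<longrightarrow> ends H g \<inter> S = {}"
    using hall_deficient_closed_pair[OF e(2,3) f] by blast
  obtain w where w: "w \<in> X \<inter> Y" "verts H - (S \<union> T) = {Some (Some w)}"
    using closed_pair_complement[OF T] .
  have A_eq: "A = insert (Some (Some w)) S" using closed_pair_A_eq[OF T w(2)] .
  have "g = e \<or> ends H g = {Some (Some w), b}" if g: "g \<in> edges H" "b \<in> ends H g" for g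
  proof -
    obtain a w' where aw: "a \<in> A" "w' \<in> B" "ends H g = {a, w'}" using edge_H_ends[OF g(1)] .
    then have "w' = b" using g(2) e(3) A_B_disjoint by auto
    then show ?thesis using b_avoids_S g aw A_eq by auto
  qed
  then show False using edges_at_partner_not_confined[OF e w(1)] A_eq by blast
qed

lemma xb_edge_ends:
  assumes "e \<in> edges H" "xb \<in> ends H e"
  obtains b where "b \<in> B" "ends H e = {xb, b}"
proof -
  obtain a b where "a \<in> A" "b \<in> B" "ends H e = {a, b}" using edge_H_ends[OF assms(1)] .
  moreover have "xb \<notin> B" using xb_in_A A_B_disjoint by auto
  ultimately show ?thesis using that assms(2) by auto
qed

lemma perfect_matching_avoiding_xb_edge:
  assumes e: "e \<in> edges H" "xb \<in> ends H e" and f: "f \<in> edges H" "f \<noteq> e"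
  shows "\<exists>M. perfect_matching H M \<and> f \<in> M \<and> e \<notin> M"
proof -
  obtain b where b: "b \<in> B" "ends H e = {xb, b}" using xb_edge_ends[OF e] .
  obtain u v where uv: "u \<in> A" "v \<in> B" "ends H f = {u, v}" using edge_H_ends[OF f(1)] .
  have "finite (A - {u})" "\<forall>a\<in>A - {u}. finite (neighbours_avoiding e v a)"
    using finite_A finite_B unfolding neighbours_avoiding_def by auto
  then have "has_sdr (A - {u}) (neighbours_avoiding e v)"
    using hall_marriage hall_condition_avoiding[OF e(1) b(2,1) f(1) uv(3,1,2)] by blast
  then obtain \<sigma> where \<sigma>: "inj_on \<sigma> (A - {u})" "\<forall>a\<in>A - {u}. \<sigma> a \<in> neighbours_avoiding e v a"
    unfolding has_sdr_def by blast
  let ?D = "delete_edge H e"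
  have D: "verts ?D = verts H" "edges ?D = edges H - {e}" "ends ?D = ends H"
    unfolding delete_edge_def by auto
  have "wf_graph ?D" using wf_H unfolding wf_graph_def D by auto
  moreover have "card A = card (verts ?D - A)" using card_A_eq_card_B unfolding D B_def .
  moreover have "f \<in> edges ?D" "ends ?D f = {u, v}" "v \<in> verts ?D - A"
    using f uv unfolding D B_def by auto
  moreover have "\<forall>a\<in>A - {u}. \<sigma> a \<in> verts ?D - A - {v} \<and> (a, \<sigma> a) \<in> adj ?D"
    using \<sigma>(2) unfolding neighbours_avoiding_def B_def D by blast
  ultimately obtain M where "perfect_matching ?D M" "f \<in> M"
    using perfect_matching_of_colour_class_sdr[OF _ colour_class_delete_edge[OF colour_class_A]
        _ _ _ uv(1) _ \<sigma>(1)] by blast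
  then show ?thesis unfolding perfect_matching_delete_edge_iff by blast
qed

lemma exists_other_edge:
  assumes "e \<in> edges H" "xb \<in> ends H e"
  obtains f where "f \<in> edges H" "f \<noteq> e"
proof (rule ccontr)
  assume "\<not> thesis"
  then have "edges H \<subseteq> {e}" using that by blast
  then have "card (M \<inter> cut G Xb) = 1" if pm: "perfect_matching G M" for M
  proof -
    have "card (M \<inter> cut G Xb) \<le> card {e}"
      using \<open>edges H \<subseteq> {e}\<close> unfolding cut_Xb_eq by (intro card_mono) auto
    then show ?thesis using odd_card_cut_Xb[OF pm] by simp presburger
  qed
  then show False using Xb_not_tight unfolding tight_cut_def by blast
qed

theorem removable_xb_edge:
  assumes "e \<in> edges H" "xb \<in> ends H e"
  shows "removable H e"
proof -
  obtain f where "f \<in> edges H" "f \<noteq> e" using exists_other_edge[OF assms] .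
  then show ?thesis
    using removableI[OF H_matching_covered assms(1)] perfect_matching_avoiding_xb_edge[OF assms] by blast
qed

end

theorem mainTheorem12:
  fixes G :: "('v, 'e) mgraph" and X Y :: "'v set"
  assumes "brick G"
    and "X \<subseteq> verts G" and "Y \<subseteq> verts G"
    and "verts G - X \<noteq> {}" and "verts G - Y \<noteq> {}"
    and "(verts G - X) \<inter> (verts G - Y) = {}"
    and "brick (contract G X)" and "brick (contract G Y)"
    and "bipartite (contract (contract G (verts G - X)) (Some ` (verts G - Y)))"
    and "matching_covered (contract (contract G (verts G - X)) (Some ` (verts G - Y)))"
  shows "\<forall>e \<in> edges (contract (contract G (verts G - X)) (Some ` (verts G - Y))).
           Some None \<in> ends (contract (contract G (verts G - X)) (Some ` (verts G - Y))) e \<longrightarrow>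
           removable (contract (contract G (verts G - X)) (Some ` (verts G - Y))) e"
proof -
  interpret bipartite_double_contraction G X Y using assms by unfold_locales
  show ?thesis using removable_xb_edge unfolding H_def by blast
qed

end
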